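(* Let $(X,\mathcal{T})$ be a connected door space and let $A,B$ be disjoint nonempty subsets of $X$ with $A$ open and $B$ closed. Then for every $C\subseteq X\setminus(A\cup B)$, the set $A\cup C$ is open and the set $B\cup C$ is closed.
   Context: A topological space $(X,\mathcal{T})$ is a connected door space if every proper nonempty subset of $X$ (i.e. every $A$ with $\varnothing\ne A\subsetneq X$) is either open or closed, but not both. *)

theory Defs
  imports "HOL-Analysis.Analysis"
begin

definition connected_door_space :: "'a topology \<Rightarrow> bool" where
  "connected_door_space T \<longleftrightarrow>
     (\<forall>A. A \<noteq> {} \<and> A \<subset> topspace T \<longrightarrow> (openin T A \<noteq> closedin T A))"

end

theory Submission
  imports Defs
begin

text \<open>A set squeezed between the open set A and the complement of the closed set B must be
  open: otherwise it is closed, and intersecting it (or its complement) with A \<union> B, which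
  is itself open or closed, would make A closed or B open. The closed half is the open half
  applied to the complement.\<close>

lemma connected_door_spaceD:
  assumes "connected_door_space T" "S \<noteq> {}" "S \<subset> topspace T"
  shows "openin T S \<longleftrightarrow> \<not> closedin T S"
  using assms unfolding connected_door_space_def by blast

lemma connected_door_space_openin_between:
  assumes door: "connected_door_space T"
    and "A \<inter> B = {}" "A \<noteq> {}" "B \<noteq> {}" "openin T A" "closedin T B"
    and "A \<subseteq> S" "S \<subseteq> topspace T - B"
  shows "openin T S"
proof (rule ccontr)
  assume S_not_open: "\<not> openin T S"
  have A_proper: "A \<subset> topspace T"
    using \<open>openin T A\<close> \<open>B \<noteq> {}\<close> \<open>A \<inter> B = {}\<close> \<open>closedin T B\<close>
    by (auto dest: openin_subset closedin_subset)
  have B_proper: "B \<subset> topspace T"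
    using \<open>closedin T B\<close> \<open>A \<noteq> {}\<close> \<open>A \<inter> B = {}\<close> \<open>openin T A\<close>
    by (auto dest: openin_subset closedin_subset)
  have A_not_closed: "\<not> closedin T A"
    using connected_door_spaceD[OF door _ A_proper] \<open>A \<noteq> {}\<close> \<open>openin T A\<close> by blast
  have B_not_open: "\<not> openin T B"
    using connected_door_spaceD[OF door _ B_proper] \<open>B \<noteq> {}\<close> \<open>closedin T B\<close> by blast
  have "S \<noteq> {}" "S \<subset> topspace T"
    using \<open>A \<subseteq> S\<close> \<open>S \<subseteq> topspace T - B\<close> \<open>A \<noteq> {}\<close> \<open>B \<noteq> {}\<close> B_proper
    by auto
  then have S_closed: "closedin T S"
    using connected_door_spaceD[OF door] S_not_open by blast
  show False
  proof (cases "openin T (A \<union> B)")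
    case True
    have "B = (A \<union> B) \<inter> (topspace T - S)"
      using \<open>A \<subseteq> S\<close> \<open>S \<subseteq> topspace T - B\<close> B_proper by blast
    then have "openin T B" using True S_closed by (metis openin_Int openin_diff openin_topspace)
    with B_not_open show False ..
  next
    case False
    then have "A \<union> B \<subset> topspace T"
      using A_proper B_proper openin_topspace by (metis Un_subset_iff psubset_eq)
    then have "closedin T (A \<union> B)"
      using connected_door_spaceD[OF door] False \<open>A \<noteq> {}\<close> by blast
    moreover have "A = (A \<union> B) \<inter> S" using \<open>A \<subseteq> S\<close> \<open>S \<subseteq> topspace T - B\<close> by blast
    ultimately have "closedin T A" using S_closed by (metis closedin_Int)
    with A_not_closed show False ..
  qed
qed

lemma connected_door_space_closedin_between:
  assumes door: "connected_door_space T"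
    and "A \<inter> B = {}" "A \<noteq> {}" "B \<noteq> {}" "openin T A" "closedin T B"
    and "B \<subseteq> S" "S \<subseteq> topspace T - A"
  shows "closedin T S"
proof -
  have "A \<subseteq> topspace T - S" "topspace T - S \<subseteq> topspace T - B"
    using \<open>B \<subseteq> S\<close> \<open>S \<subseteq> topspace T - A\<close> \<open>openin T A\<close> by (auto dest: openin_subset)
  then have "openin T (topspace T - S)"
    by (rule connected_door_space_openin_between[OF door assms(2-6)])
  then show ?thesis
    using \<open>S \<subseteq> topspace T - A\<close> closedin_def by blast
qed

theorem lemma1:
  fixes T :: "'a topology" and A B C :: "'a set"
  assumes "connected_door_space T"
    and "A \<subseteq> topspace T" and "B \<subseteq> topspace T"
    and "A \<inter> B = {}" and "A \<noteq> {}" and "B \<noteq> {}"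
    and "openin T A" and "closedin T B"
    and "C \<subseteq> topspace T - (A \<union> B)"
  shows "openin T (A \<union> C) \<and> closedin T (B \<union> C)"
proof
  show "openin T (A \<union> C)"
    by (rule connected_door_space_openin_between[of T A B]) (use assms in auto)
  show "closedin T (B \<union> C)"
    by (rule connected_door_space_closedin_between[of T A B]) (use assms in auto)
qed

end
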